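(* Let $(X(n),V(n))_{n\ge0}$ be a global solution of the discrete Motsch–Tadmor model (as in the context, under its standing assumptions). Then for all $n\ge0$, \[ \|\Delta^x(n+1)\|_F\le\|\Delta^x(n)\|_F+h\|\Delta^v(n)\|_F,\qquad \|\Delta^v(n+1)\|_F\le\Big[1-h\kappa\big(1-\|\phi\|_{\mathrm{Lip}}N\|\Delta^x(n)\|_F\big)\Big]\|\Delta^v(n)\|_F . \]
   Context: Discrete MT model: fix $N\ge1$, $d\ge1$, $\kappa>0$, $h>0$, and $a:[0,\infty)\to\mathbb{R}$ with constants $0<c_1\le c_2$, $c_1\le a\le c_2$, and $|a(r_1)-a(r_2)|\le L_a|r_1-r_2|$ ($L_a>0$); also $0<h<\min\{1,1/\kappa\}$. A solution satisfies $x_i(n+1)=x_i(n)+hv_i(n)$, $v_i(n+1)=v_i(n)+h\kappa\sum_{j=1}^N\phi_{ij}(n)(v_j(n)-v_i(n))$, $\phi_{ij}(n)=\frac{a(\|x_i(n)-x_j(n)\|)}{\sum_{k}a(\|x_i(n)-x_k(n)\|)}$, with $x_i(n),v_i(n)\in\mathbb{R}^d$. Notation: $\|\Delta^x(n)\|_F=(\sum_{i,j}\|x_i(n)-x_j(n)\|^2)^{1/2}$, $\|\Delta^v(n)\|_F=(\sum_{i,j}\|v_i(n)-v_j(n)\|^2)^{1/2}$, $\|\phi\|_{\mathrm{Lip}}=\frac{L_a}{Nc_1}(1+\frac{c_2}{c_1})$. *)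

theory Defs
  imports "HOL-Analysis.Analysis"
begin

text \<open>Agents are indexed by i < N; states live in real^'d (d = CARD('d) \<ge> 1).
  A trajectory is a map from time steps n to agent configurations.\<close>

definition MT_weight ::
  "nat \<Rightarrow> (real \<Rightarrow> real) \<Rightarrow> (nat \<Rightarrow> real^'d) \<Rightarrow> nat \<Rightarrow> nat \<Rightarrow> real" where
  "MT_weight N a X i j =
     a (norm (X i - X j)) / (\<Sum>k<N. a (norm (X i - X k)))"

definition MT_solution ::
  "nat \<Rightarrow> real \<Rightarrow> real \<Rightarrow> (real \<Rightarrow> real) \<Rightarrow>
   (nat \<Rightarrow> nat \<Rightarrow> real^'d) \<Rightarrow> (nat \<Rightarrow> nat \<Rightarrow> real^'d) \<Rightarrow> bool" where
  "MT_solution N \<kappa> h a x v \<longleftrightarrow>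
     (\<forall>n i. i < N \<longrightarrow>
        x (Suc n) i = x n i + h *\<^sub>R v n i \<and>
        v (Suc n) i = v n i + (h * \<kappa>) *\<^sub>R
           (\<Sum>j<N. MT_weight N a (x n) i j *\<^sub>R (v n j - v n i)))"

definition frob_diff :: "nat \<Rightarrow> (nat \<Rightarrow> real^'d) \<Rightarrow> real" where
  "frob_diff N X = sqrt (\<Sum>i<N. \<Sum>j<N. (norm (X i - X j))\<^sup>2)"

definition phi_Lip :: "nat \<Rightarrow> real \<Rightarrow> real \<Rightarrow> real \<Rightarrow> real" where
  "phi_Lip N La c1 c2 = La / (real N * c1) * (1 + c2 / c1)"

end

theory Submission
  imports Defs
begin

text \<open>Both estimates are entrywise bounds on the matrix of pairwise differences, lifted to
  the Frobenius norm by the triangle inequality in \<open>\<ell>\<^sup>2\<close>. For the velocities, the rows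
  of \<open>\<phi>\<close> sum to 1, so the update is the convex combination \<open>(1 - h\<kappa>) v\<^sub>i + h\<kappa> \<Sum>\<^sub>k \<phi>\<^sub>i\<^sub>k v\<^sub>k\<close>; two such weighted averages differ
  by \<open>\<Sum>\<^sub>k (\<phi>\<^sub>i\<^sub>k - \<phi>\<^sub>j\<^sub>k) (v\<^sub>k - v\<^sub>j)\<close>, and \<open>\<phi>\<^sub>i\<^sub>k\<close> is Lipschitz in \<open>x\<^sub>i\<close> with constant \<open>\<parallel>\<phi>\<parallel>\<^sub>L\<^sub>i\<^sub>p\<close>.\<close>

lemma frob_diff_eq_L2_set:
  "frob_diff N X = L2_set (\<lambda>(i, j). norm (X i - X j)) ({..<N} \<times> {..<N})"
  unfolding frob_diff_def L2_set_def
  by (simp add: sum.cartesian_product case_prod_beta)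

lemma frob_diff_nonneg: "0 \<le> frob_diff N X"
  unfolding frob_diff_eq_L2_set by (rule L2_set_nonneg)

lemma norm_diff_le_frob_diff:
  assumes "i < N" "j < N"
  shows "norm (X i - X j) \<le> frob_diff N X"
  using member_le_L2_set[of "{..<N} \<times> {..<N}" "(i, j)" "\<lambda>(i, j). norm (X i - X j)"] assms
  by (simp add: frob_diff_eq_L2_set)

lemma frob_diff_le_linear_combination:
  assumes "0 \<le> p" "0 \<le> q"
    and "\<And>i j. i < N \<Longrightarrow> j < N \<Longrightarrow>
           norm (Y i - Y j) \<le> p * norm (X i - X j) + q * norm (Z i - Z j)"
  shows "frob_diff N Y \<le> p * frob_diff N X + q * frob_diff N Z"
proof -
  let ?A = "{..<N} \<times> {..<N}"
  let ?f = "\<lambda>(i, j). norm (X i - X j)" and ?g = "\<lambda>(i, j). norm (Z i - Z j)"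
  have "frob_diff N Y \<le> L2_set (\<lambda>z. p * ?f z + q * ?g z) ?A"
    unfolding frob_diff_eq_L2_set by (rule L2_set_mono) (auto intro: assms(3))
  also have "\<dots> \<le> L2_set (\<lambda>z. p * ?f z) ?A + L2_set (\<lambda>z. q * ?g z) ?A"
    by (rule L2_set_triangle_ineq)
  also have "\<dots> = p * frob_diff N X + q * frob_diff N Z"
    using assms(1,2) by (simp add: L2_set_right_distrib frob_diff_eq_L2_set)
  finally show ?thesis .
qed

lemma MT_weight_sum_eq_1:
  assumes "0 < N" and "\<And>r. 0 \<le> r \<Longrightarrow> 0 < a r"
  shows "(\<Sum>j<N. MT_weight N a X i j) = 1"
proof -
  have "0 < (\<Sum>k<N. a (norm (X i - X k)))"
    using assms by (intro sum_pos) auto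
  then show ?thesis
    unfolding MT_weight_def by (simp add: sum_divide_distrib[symmetric])
qed

lemma abs_diff_divide_le:
  fixes u u' S S' M c :: real
  assumes "0 < M" "M \<le> S" "M \<le> S'" "0 \<le> u'" "u' \<le> c"
  shows "\<bar>u / S - u' / S'\<bar> \<le> \<bar>u - u'\<bar> / M + c * \<bar>S' - S\<bar> / M\<^sup>2"
proof -
  have "u / S - u' / S' = (u - u') / S + u' * (S' - S) / (S * S')"
    using assms by (simp add: field_simps)
  also have "\<bar>\<dots>\<bar> \<le> \<bar>u - u'\<bar> / S + u' * \<bar>S' - S\<bar> / (S * S')"
    using assms by (simp add: abs_mult abs_triangle_ineq[THEN order_trans])
  also have "\<dots> \<le> \<bar>u - u'\<bar> / M + c * \<bar>S' - S\<bar> / M\<^sup>2"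
  proof (rule add_mono)
    show "\<bar>u - u'\<bar> / S \<le> \<bar>u - u'\<bar> / M"
      using assms by (intro divide_left_mono) auto
    have "M\<^sup>2 \<le> S * S'"
      using assms mult_mono[of M S M S'] by (simp add: power2_eq_square)
    then show "u' * \<bar>S' - S\<bar> / (S * S') \<le> c * \<bar>S' - S\<bar> / M\<^sup>2"
      using assms by (intro frac_le mult_right_mono) auto
  qed
  finally show ?thesis .
qed

lemma MT_weight_Lipschitz:
  fixes X :: "nat \<Rightarrow> real^'d"
  assumes "0 < N" "0 < c1" "0 \<le> La"
    and abnd: "\<And>r. 0 \<le> r \<Longrightarrow> c1 \<le> a r \<and> a r \<le> c2"
    and alip: "\<And>r1 r2. 0 \<le> r1 \<Longrightarrow> 0 \<le> r2 \<Longrightarrow> \<bar>a r1 - a r2\<bar> \<le> La * \<bar>r1 - r2\<bar>"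
  shows "\<bar>MT_weight N a X i k - MT_weight N a X j k\<bar> \<le> phi_Lip N La c1 c2 * norm (X i - X j)"
proof -
  define d where "d = norm (X i - X j)"
  define S where "S m = (\<Sum>l<N. a (norm (X m - X l)))" for m
  have a_diff: "\<bar>a (norm (X i - X l)) - a (norm (X j - X l))\<bar> \<le> La * d" for l
  proof -
    have "\<bar>norm (X i - X l) - norm (X j - X l)\<bar> \<le> d"
      using norm_triangle_ineq3[of "X i - X l" "X j - X l"] by (simp add: d_def)
    then show ?thesis
      using alip[of "norm (X i - X l)" "norm (X j - X l)"] \<open>0 \<le> La\<close>
      by (simp add: order_trans mult_left_mono)
  qed
  have a_nonneg: "0 \<le> a r" if "0 \<le> r" for r
    using abnd[OF that] \<open>0 < c1\<close> by linarith
  have "0 \<le> c2"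
    using abnd[of 0] \<open>0 < c1\<close> by linarith
  have S_ge: "real N * c1 \<le> S m" for m
    using sum_mono[of "{..<N}" "\<lambda>_. c1" "\<lambda>l. a (norm (X m - X l))"] abnd by (simp add: S_def)
  have "\<bar>S j - S i\<bar> \<le> (\<Sum>l<N. \<bar>a (norm (X i - X l)) - a (norm (X j - X l))\<bar>)"
    unfolding S_def by (subst abs_minus_commute) (simp add: sum_subtractf[symmetric] sum_abs)
  also have "\<dots> \<le> real N * (La * d)"
    using sum_mono[of "{..<N}", OF a_diff] by simp
  finally have S_diff: "\<bar>S j - S i\<bar> \<le> real N * (La * d)" .
  have "\<bar>MT_weight N a X i k - MT_weight N a X j k\<bar>
      \<le> \<bar>a (norm (X i - X k)) - a (norm (X j - X k))\<bar> / (real N * c1)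
        + c2 * \<bar>S j - S i\<bar> / (real N * c1)\<^sup>2"
    unfolding MT_weight_def S_def[symmetric]
    using assms abnd S_ge a_nonneg by (intro abs_diff_divide_le) auto
  also have "\<dots> \<le> La * d / (real N * c1) + c2 * (real N * (La * d)) / (real N * c1)\<^sup>2"
    using assms a_diff[of k] S_diff \<open>0 \<le> c2\<close>
    by (intro add_mono divide_right_mono mult_left_mono) auto
  also have "\<dots> = phi_Lip N La c1 c2 * d"
    unfolding phi_Lip_def using assms by (simp add: field_simps power2_eq_square)
  finally show ?thesis by (simp add: d_def)
qed

text \<open>Equal row sums let the common vector \<open>V j\<close> be subtracted inside the sum.\<close>

lemma norm_diff_weighted_sums_le:
  fixes V :: "nat \<Rightarrow> real^'d"
  assumes "j < N" and "(\<Sum>k<N. \<psi> k) = (\<Sum>k<N. \<psi>' k)"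
  shows "norm ((\<Sum>k<N. \<psi> k *\<^sub>R V k) - (\<Sum>k<N. \<psi>' k *\<^sub>R V k))
           \<le> (\<Sum>k<N. \<bar>\<psi> k - \<psi>' k\<bar>) * frob_diff N V"
proof -
  have "(\<Sum>k<N. \<psi> k *\<^sub>R V k) - (\<Sum>k<N. \<psi>' k *\<^sub>R V k)
      = (\<Sum>k<N. (\<psi> k - \<psi>' k) *\<^sub>R (V k - V j))"
    using assms(2)
    by (simp add: algebra_simps sum_subtractf sum.distrib scaleR_sum_left[symmetric])
  also have "norm \<dots> \<le> (\<Sum>k<N. \<bar>\<psi> k - \<psi>' k\<bar> * norm (V k - V j))"
    using norm_sum[of "\<lambda>k. (\<psi> k - \<psi>' k) *\<^sub>R (V k - V j)"] by simp
  also have "\<dots> \<le> (\<Sum>k<N. \<bar>\<psi> k - \<psi>' k\<bar> * frob_diff N V)"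
    using assms(1) by (intro sum_mono mult_left_mono norm_diff_le_frob_diff) auto
  finally show ?thesis by (simp add: sum_distrib_right)
qed

lemma consensus_step_diff_le:
  fixes V X W :: "nat \<Rightarrow> real^'d"
  assumes "0 \<le> t" "t \<le> 1" "0 \<le> L"
    and rows: "\<And>i. i < N \<Longrightarrow> (\<Sum>k<N. \<psi> i k) = 1"
    and lip: "\<And>i j k. \<bar>\<psi> i k - \<psi> j k\<bar> \<le> L * norm (X i - X j)"
    and W: "\<And>i. i < N \<Longrightarrow> W i = V i + t *\<^sub>R (\<Sum>k<N. \<psi> i k *\<^sub>R (V k - V i))"
    and "i < N" "j < N"
  shows "norm (W i - W j)
           \<le> (1 - t) * norm (V i - V j) + t * (real N * L * frob_diff N V) * norm (X i - X j)"
proof -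
  define w where "w m = (\<Sum>k<N. \<psi> m k *\<^sub>R V k)" for m
  have W_convex: "W m = (1 - t) *\<^sub>R V m + t *\<^sub>R w m" if "m < N" for m
    using W[OF that] rows[OF that]
    by (simp add: w_def algebra_simps sum_subtractf scaleR_sum_left[symmetric])
  have "norm (w i - w j) \<le> (\<Sum>k<N. \<bar>\<psi> i k - \<psi> j k\<bar>) * frob_diff N V"
    unfolding w_def using assms by (intro norm_diff_weighted_sums_le) auto
  also have "\<dots> \<le> (\<Sum>k<N. L * norm (X i - X j)) * frob_diff N V"
    using lip by (intro mult_right_mono sum_mono) (auto simp: frob_diff_nonneg)
  finally have w_diff: "norm (w i - w j) \<le> real N * L * frob_diff N V * norm (X i - X j)"
    by (simp add: mult_ac)
  have "W i - W j = (1 - t) *\<^sub>R (V i - V j) + t *\<^sub>R (w i - w j)"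
    unfolding W_convex[OF \<open>i < N\<close>] W_convex[OF \<open>j < N\<close>] by (simp add: algebra_simps)
  then have "norm (W i - W j) \<le> (1 - t) * norm (V i - V j) + t * norm (w i - w j)"
    using norm_triangle_ineq[of "(1 - t) *\<^sub>R (V i - V j)" "t *\<^sub>R (w i - w j)"] assms by simp
  also have "\<dots> \<le> (1 - t) * norm (V i - V j) + t * (real N * L * frob_diff N V) * norm (X i - X j)"
    using mult_left_mono[OF w_diff \<open>0 \<le> t\<close>] by (simp add: mult_ac)
  finally show ?thesis .
qed

theorem proposition3p3:
  fixes N :: nat and \<kappa> h c1 c2 La :: real and a :: "real \<Rightarrow> real"
    and x v :: "nat \<Rightarrow> nat \<Rightarrow> real^'d"
  assumes N: "N \<ge> 1"
    and kappa: "\<kappa> > 0"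
    and hpos: "h > 0" and h1: "h < 1" and hk: "h < 1 / \<kappa>"
    and c1: "0 < c1" and c12: "c1 \<le> c2"
    and abnd: "\<And>r. r \<ge> 0 \<Longrightarrow> c1 \<le> a r \<and> a r \<le> c2"
    and La: "La > 0"
    and alip: "\<And>r1 r2. r1 \<ge> 0 \<Longrightarrow> r2 \<ge> 0 \<Longrightarrow> \<bar>a r1 - a r2\<bar> \<le> La * \<bar>r1 - r2\<bar>"
    and sol: "MT_solution N \<kappa> h a x v"
  shows "\<forall>n. frob_diff N (x (Suc n)) \<le> frob_diff N (x n) + h * frob_diff N (v n) \<and>
             frob_diff N (v (Suc n)) \<le>
               (1 - h * \<kappa> * (1 - phi_Lip N La c1 c2 * real N * frob_diff N (x n)))
               * frob_diff N (v n)"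
proof
  fix n
  let ?L = "phi_Lip N La c1 c2"
  have hk1: "0 \<le> h * \<kappa>" "h * \<kappa> \<le> 1"
    using hpos kappa hk by (simp_all add: field_simps)
  have L0: "0 \<le> ?L"
    using La c1 c12 by (simp add: phi_Lip_def)
  have "frob_diff N (x (Suc n)) \<le> 1 * frob_diff N (x n) + h * frob_diff N (v n)"
  proof (rule frob_diff_le_linear_combination)
    fix i j assume "i < N" "j < N"
    then have "x (Suc n) i - x (Suc n) j = (x n i - x n j) + h *\<^sub>R (v n i - v n j)"
      using sol by (simp add: MT_solution_def algebra_simps)
    then show "norm (x (Suc n) i - x (Suc n) j) \<le> 1 * norm (x n i - x n j) + h * norm (v n i - v n j)"
      using norm_triangle_ineq[of "x n i - x n j" "h *\<^sub>R (v n i - v n j)"] hpos by simp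
  qed (use hpos in auto)
  moreover have "frob_diff N (v (Suc n))
      \<le> (1 - h * \<kappa>) * frob_diff N (v n) + h * \<kappa> * (real N * ?L * frob_diff N (v n)) * frob_diff N (x n)"
  proof (rule frob_diff_le_linear_combination)
    fix i j assume "i < N" "j < N"
    with sol hk1 L0 show "norm (v (Suc n) i - v (Suc n) j)
        \<le> (1 - h * \<kappa>) * norm (v n i - v n j)
          + h * \<kappa> * (real N * ?L * frob_diff N (v n)) * norm (x n i - x n j)"
      using MT_weight_sum_eq_1[of N a] MT_weight_Lipschitz[of N c1 La a c2] N c1 La abnd alip
      by (intro consensus_step_diff_le[where \<psi> = "MT_weight N a (x n)"])
         (auto simp: MT_solution_def order_less_le_trans)
  qed (use hk1 L0 frob_diff_nonneg in \<open>auto intro!: mult_nonneg_nonneg\<close>)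
  ultimately show "frob_diff N (x (Suc n)) \<le> frob_diff N (x n) + h * frob_diff N (v n) \<and>
      frob_diff N (v (Suc n)) \<le> (1 - h * \<kappa> * (1 - ?L * real N * frob_diff N (x n))) * frob_diff N (v n)"
    by (simp add: algebra_simps)
qed

end
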